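(* Let $R$ be a (unital, not necessarily associative) ring, let $\sigma\colon R\to R$ be an additive surjection with $\sigma(1)=1$, and let $\delta\colon R\to R$ be an additive map with $\delta(1)=0$. Then for every $n\in\mathbb{N}$, in the non-associative Ore extension $R[X;\sigma,\delta]$ one has $\sum_{i=0}^n X^iR=\sum_{i=0}^n RX^i$, as right $R$-modules (in particular as subsets of $R[X;\sigma,\delta]$).
   Context: $\mathbb{N}$ includes $0$. For a non-associative ring $R$ and additive maps $\sigma,\delta\colon R\to R$ with $\sigma(1)=1$, $\delta(1)=0$, the non-associative Ore extension $R[X;\sigma,\delta]$ is the additive group of formal sums $\sum_{i\in\mathbb{N}} r_iX^i$ ($r_i\in R$, finitely many non-zero) with pointwise addition and multiplication the biadditive extension of $(rX^m)(sX^n)=\sum_{i\in\mathbb{N}}(r\pi_i^m(s))X^{i+n}$ for $r,s\in R$, $m,n\in\mathbb{N}$, where $\pi_i^m$ is the sum of all $\binom{m}{i}$ compositions of $i$ copies of $\sigma$ and $m-i$ copies of $\delta$, and $\pi_i^m=0$ if $i>m$. $R$ is identified with $RX^0$; $X^iR$ denotes $\{X^i r: r\in R\}$ and $RX^i=\{rX^i:r\in R\}$, sums of such sets are sets of sums. *)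

theory Defs
  imports Main
begin

text \<open>Elements of the non-associative Ore extension R[X;sigma,delta] are represented
as finitely supported coefficient functions nat => R (p k = coefficient of X^k).
The ring R is a type with additive abelian group structure, a multiplication and a 1;
the (non-associative, unital) ring axioms are explicit hypotheses of the theorem.\<close>

text \<open>pi_i^m: the sum of all compositions of i copies of sigma and m-i copies of delta,
indexed by boolean words of length m with exactly i entries True (True = sigma).
It is 0 automatically when i > m (empty sum).\<close>
definition ore_pi :: "('a::ab_group_add \<Rightarrow> 'a) \<Rightarrow> ('a \<Rightarrow> 'a) \<Rightarrow> nat \<Rightarrow> nat \<Rightarrow> 'a \<Rightarrow> 'a" where
  "ore_pi \<sigma> \<delta> m i = (\<lambda>r. \<Sum>w \<in> {w::bool list. length w = m \<and> count_list w True = i}.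
        foldr (\<lambda>b f. (if b then \<sigma> else \<delta>) \<circ> f) w id r)"

definition finsupp :: "(nat \<Rightarrow> 'a::zero) \<Rightarrow> bool" where
  "finsupp p \<longleftrightarrow> finite {k. p k \<noteq> 0}"

text \<open>Product in R[X;sigma,delta]: biadditive extension of
 (r X^m)(s X^n) = sum_i (r * pi_i^m(s)) X^(i+n).\<close>
definition ore_mult :: "('a::{ab_group_add,times} \<Rightarrow> 'a) \<Rightarrow> ('a \<Rightarrow> 'a) \<Rightarrow>
    (nat \<Rightarrow> 'a) \<Rightarrow> (nat \<Rightarrow> 'a) \<Rightarrow> (nat \<Rightarrow> 'a)" where
  "ore_mult \<sigma> \<delta> p q = (\<lambda>k. \<Sum>m \<in> {m. p m \<noteq> 0}. \<Sum>n \<in> {n. q n \<noteq> 0}.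
       if n \<le> k then p m * ore_pi \<sigma> \<delta> m (k - n) (q n) else 0)"

definition monom :: "'a::zero \<Rightarrow> nat \<Rightarrow> (nat \<Rightarrow> 'a)" where
  "monom r i = (\<lambda>k. if k = i then r else 0)"

definition XpowR :: "('a::{ab_group_add,times,one} \<Rightarrow> 'a) \<Rightarrow> ('a \<Rightarrow> 'a) \<Rightarrow> nat \<Rightarrow> (nat \<Rightarrow> 'a) set" where
  "XpowR \<sigma> \<delta> i = {ore_mult \<sigma> \<delta> (monom 1 i) (monom r 0) | r. True}"

definition RXpow :: "nat \<Rightarrow> (nat \<Rightarrow> 'a::zero) set" where
  "RXpow i = {monom r i | r. True}"

definition set_sum_upto :: "(nat \<Rightarrow> (nat \<Rightarrow> 'a::comm_monoid_add) set) \<Rightarrow> nat \<Rightarrow> (nat \<Rightarrow> 'a) set" where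
  "set_sum_upto A n = {(\<lambda>k. \<Sum>i\<le>n. g i k) | g. \<forall>i\<le>n. g i \<in> A i}"

end

theory Submission
  imports Defs
begin

text \<open>The element X^i r = sum_k pi_k^i(r) X^k has degree at most i and leading coefficient
  sigma^i(r). Hence X^i R, like R X^i, consists of polynomials of degree at most i whose
  leading coefficients exhaust R, the latter because sigma^i is surjective. Any such family
  sums up to all polynomials of degree at most n: subtract a member of the n-th set with the
  same leading coefficient and induct on n.\<close>

definition deg_le :: "nat \<Rightarrow> (nat \<Rightarrow> 'a::zero) set" where
  "deg_le n = {p. \<forall>k>n. p k = 0}"

lemma set_sum_upto_0:
  assumes "p \<in> A 0"
  shows "p \<in> set_sum_upto A 0"
  using assms unfolding set_sum_upto_def by force

lemma set_sum_upto_Suc: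
  assumes "p \<in> set_sum_upto A n" and "q \<in> A (Suc n)"
  shows "(\<lambda>k. p k + q k) \<in> set_sum_upto A (Suc n)"
proof -
  obtain g where g: "\<forall>i\<le>n. g i \<in> A i" and p: "p = (\<lambda>k. \<Sum>i\<le>n. g i k)"
    using assms(1) unfolding set_sum_upto_def by auto
  let ?g = "g(Suc n := q)"
  have "\<forall>i\<le>Suc n. ?g i \<in> A i"
    using g assms(2) by (auto simp: le_Suc_eq)
  moreover have "(\<lambda>k. p k + q k) = (\<lambda>k. \<Sum>i\<le>Suc n. ?g i k)"
    unfolding p by simp
  ultimately show ?thesis
    unfolding set_sum_upto_def by blast
qed

lemma set_sum_upto_subset_deg_le:
  assumes "\<And>i. A i \<subseteq> deg_le i"
  shows "set_sum_upto A n \<subseteq> deg_le n"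
proof
  fix p assume "p \<in> set_sum_upto A n"
  then obtain g where g: "\<forall>i\<le>n. g i \<in> A i" and p: "p = (\<lambda>k. \<Sum>i\<le>n. g i k)"
    unfolding set_sum_upto_def by auto
  have "g i k = 0" if "i \<le> n" "n < k" for i k
    using g assms that unfolding deg_le_def by fastforce
  then show "p \<in> deg_le n"
    unfolding p deg_le_def by simp
qed

lemma deg_le_subset_set_sum_upto:
  fixes A :: "nat \<Rightarrow> (nat \<Rightarrow> 'a::ab_group_add) set"
  assumes deg: "\<And>i. A i \<subseteq> deg_le i"
    and lead: "\<And>i c. \<exists>q\<in>A i. q i = c"
  shows "deg_le n \<subseteq> set_sum_upto A n"
proof (induction n)
  case 0
  show ?case
  proof
    fix p :: "nat \<Rightarrow> 'a" assume p: "p \<in> deg_le 0"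
    obtain q where q: "q \<in> A 0" "q 0 = p 0"
      using lead by blast
    have "q = p"
    proof
      fix k
      have "q \<in> deg_le 0"
        using q(1) deg by blast
      then show "q k = p k"
        using q(2) p unfolding deg_le_def by (cases k) auto
    qed
    then show "p \<in> set_sum_upto A 0"
      using q set_sum_upto_0 by blast
  qed
next
  case (Suc n)
  show ?case
  proof
    fix p :: "nat \<Rightarrow> 'a" assume p: "p \<in> deg_le (Suc n)"
    obtain q where q: "q \<in> A (Suc n)" "q (Suc n) = p (Suc n)"
      using lead by blast
    have "q \<in> deg_le (Suc n)"
      using q(1) deg by blast
    then have "p k - q k = 0" if "n < k" for k
      using p q(2) that unfolding deg_le_def by (cases "k = Suc n") auto
    then have "(\<lambda>k. p k - q k) \<in> deg_le n"
      unfolding deg_le_def by simp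
    then have "(\<lambda>k. (p k - q k) + q k) \<in> set_sum_upto A (Suc n)"
      using Suc.IH q(1) set_sum_upto_Suc by blast
    then show "p \<in> set_sum_upto A (Suc n)"
      by simp
  qed
qed

lemma set_sum_upto_eq_deg_le:
  fixes A :: "nat \<Rightarrow> (nat \<Rightarrow> 'a::ab_group_add) set"
  assumes "\<And>i. A i \<subseteq> deg_le i"
    and "\<And>i c. \<exists>q\<in>A i. q i = c"
  shows "set_sum_upto A n = deg_le n"
  using assms set_sum_upto_subset_deg_le deg_le_subset_set_sum_upto by (metis subset_antisym)

lemma RXpow_subset_deg_le: "RXpow i \<subseteq> deg_le i"
  unfolding RXpow_def deg_le_def monom_def by auto

lemma RXpow_lead: "\<exists>q\<in>RXpow i. q i = c"
  unfolding RXpow_def monom_def by auto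

lemma ore_pi_zero:
  assumes "\<sigma> 0 = 0" and "\<delta> 0 = 0"
  shows "ore_pi \<sigma> \<delta> m i 0 = 0"
proof -
  have "foldr (\<lambda>b f. (if b then \<sigma> else \<delta>) \<circ> f) w id 0 = 0" for w
    using assms by (induction w) auto
  then show ?thesis
    unfolding ore_pi_def by simp
qed

lemma ore_pi_eq_0_if_less:
  assumes "m < i"
  shows "ore_pi \<sigma> \<delta> m i r = 0"
proof -
  have no_words: "{w::bool list. length w = m \<and> count_list w True = i} = {}"
    using assms count_le_length[of _ True] by (auto simp: not_le[symmetric])
  show ?thesis
    by (simp add: ore_pi_def no_words)
qed

lemma count_list_eq_length_iff: "count_list xs x = length xs \<longleftrightarrow> (\<forall>y\<in>set xs. y = x)"
proof (induction xs)
  case (Cons a xs)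
  then show ?case
    using count_le_length[of xs x] by auto
qed simp

lemma ore_pi_diag: "ore_pi \<sigma> \<delta> m m r = (\<sigma> ^^ m) r"
proof -
  have "{w::bool list. length w = m \<and> count_list w True = m} = {replicate m True}"
    using count_list_eq_length_iff[of "replicate m True" True]
    by (auto simp: count_list_eq_length_iff replicate_length_same)
  moreover have "foldr (\<lambda>b f. (if b then \<sigma> else \<delta>) \<circ> f) (replicate m True) id = \<sigma> ^^ m"
    by (induction m) auto
  ultimately show ?thesis
    unfolding ore_pi_def by simp
qed

lemma ore_mult_monom:
  fixes r s :: "'a::{ab_group_add,times}"
  assumes mult_0_left: "\<And>x::'a. 0 * x = 0" and mult_0_right: "\<And>x::'a. x * 0 = 0"
    and "\<sigma> 0 = 0" and "\<delta> 0 = 0"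
  shows "ore_mult \<sigma> \<delta> (monom r m) (monom s n) =
    (\<lambda>k. if n \<le> k then r * ore_pi \<sigma> \<delta> m (k - n) s else 0)"
proof
  fix k
  consider "r = 0" | "s = 0" | "r \<noteq> 0" "s \<noteq> 0"
    by blast
  then show "ore_mult \<sigma> \<delta> (monom r m) (monom s n) k =
    (if n \<le> k then r * ore_pi \<sigma> \<delta> m (k - n) s else 0)"
  proof cases
    case 1
    then show ?thesis
      by (simp add: ore_mult_def monom_def mult_0_left)
  next
    case 2
    then show ?thesis
      by (simp add: ore_mult_def monom_def mult_0_right ore_pi_zero assms)
  next
    case 3
    then have "{j. monom r m j \<noteq> 0} = {m}" and "{j. monom s n j \<noteq> 0} = {n}"
      by (auto simp: monom_def)
    then show ?thesis
      by (simp add: ore_mult_def monom_def)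
  qed
qed

theorem lemma12:
  fixes \<sigma> \<delta> :: "'a::{ab_group_add,times,one} \<Rightarrow> 'a" and n :: nat
  assumes distl: "\<And>a b c::'a. a * (b + c) = a * b + a * c"
    and distr: "\<And>a b c::'a. (a + b) * c = a * c + b * c"
    and one_l: "\<And>a::'a. 1 * a = a"
    and one_r: "\<And>a::'a. a * 1 = a"
    and \<sigma>_add: "\<And>a b. \<sigma> (a + b) = \<sigma> a + \<sigma> b"
    and \<sigma>_surj: "surj \<sigma>"
    and \<sigma>_one: "\<sigma> 1 = 1"
    and \<delta>_add: "\<And>a b. \<delta> (a + b) = \<delta> a + \<delta> b"
    and \<delta>_one: "\<delta> 1 = 0"
  shows "set_sum_upto (XpowR \<sigma> \<delta>) n = set_sum_upto RXpow n"
proof -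
  have "0 * x = 0" and "x * 0 = 0" for x :: 'a
    using distr[of 0 0 x] distl[of x 0 0] by simp_all
  moreover have "\<sigma> 0 = 0" and "\<delta> 0 = 0"
    using \<sigma>_add[of 0 0] \<delta>_add[of 0 0] by simp_all
  ultimately have XpowR_eq: "XpowR \<sigma> \<delta> i = range (\<lambda>r k. ore_pi \<sigma> \<delta> i k r)" for i
    unfolding XpowR_def by (auto simp: ore_mult_monom one_l)
  have "XpowR \<sigma> \<delta> i \<subseteq> deg_le i" for i
    unfolding XpowR_eq deg_le_def by (auto intro: ore_pi_eq_0_if_less)
  moreover have "\<exists>q\<in>XpowR \<sigma> \<delta> i. q i = c" for i c
  proof -
    obtain r where "(\<sigma> ^^ i) r = c"
      using surj_fn[OF \<sigma>_surj] by (metis surjD)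
    then show ?thesis
      unfolding XpowR_eq by (auto simp: ore_pi_diag)
  qed
  ultimately have "set_sum_upto (XpowR \<sigma> \<delta>) n = deg_le n"
    by (rule set_sum_upto_eq_deg_le)
  moreover have "set_sum_upto (RXpow :: nat \<Rightarrow> (nat \<Rightarrow> 'a) set) n = deg_le n"
    using RXpow_subset_deg_le RXpow_lead by (rule set_sum_upto_eq_deg_le)
  ultimately show ?thesis
    by simp
qed

end
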